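(* Let $Q\in\mathbb{R}^{n\times n}$ be symmetric positive definite, let $g\in\mathbb{R}^n$, let $\sigma\in(0,1/2]$ and $tol\ge 0$, and let the initial active set $A\subseteq\{1,\dots,n\}$ be arbitrary. Then the generic random active set method (described in the context) stops after finitely many iterations with probability $1$.
   Context: Consider the problem $\min_{x\in\mathbb{R}^n}\tfrac12 x^TQx+g^Tx$ subject to $x\ge 0$. For index sets $A,B\subseteq\{1,\dots,n\}$, $x_A$ denotes the subvector of $x$ indexed by $A$ and $Q_{A,B}$ the submatrix with rows in $A$ and columns in $B$. For a finite index set $S$ and a vector $p=(p_j)_{j\in S}$ of probabilities, $\mathrm{rand}(S,p)$ denotes a random subset of $S$ containing each $j\in S$ independently with probability $p_j$. Generic random active set method (RAS): Step 0: given $\sigma\in(0,1/2]$, an initial active set $A$, $I=\{1,\dots,n\}\setminus A$, and $tol\ge 0$. Step 1: compute $x_I=-Q_{I,I}^{-1}g_I$ and $s_A=Q_{A,I}x_I+g_A$; set $Im=\{i\in I: x_i\le 0\}$, $Am=\{j\in A: s_j<-tol\}$, $Ip=I\setminus Im$, $Ap=A\setminus Am$. Step 2: if $Im\cup Am=\emptyset$, stop. Otherwise choose (possibly depending on the whole history) vectors $p_{Im}\in\mathbb{R}^{|Im|}$, $p_{Am}\in\mathbb{R}^{|Am|}$ with every entry in $[\sigma,1-\sigma]$, and let $Imc=\mathrm{rand}(Im,p_{Im})$, $Imf=Im\setminus Imc$, $Amc=\mathrm{rand}(Am,p_{Am})$, $Amf=Am\setminus Amc$ (fresh independent randomness at each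 iteration). Step 3: set $I\leftarrow Ip\cup Imf\cup Amc$, $A\leftarrow Ap\cup Amf\cup Imc$, and return to Step 1. *)

theory Defs
  imports "HOL-Probability.Probability"
begin

text \<open>Indices are 0..n-1. Q :: nat => nat => real is an n x n matrix (entries with
  indices < n), g :: nat => real a vector. Active sets are subsets of {0..<n}.\<close>

definition sym_posdef :: "nat \<Rightarrow> (nat \<Rightarrow> nat \<Rightarrow> real) \<Rightarrow> bool" where
  "sym_posdef n Q \<longleftrightarrow> (\<forall>i<n. \<forall>j<n. Q i j = Q j i) \<and>
     (\<forall>x::nat \<Rightarrow> real. (\<exists>i<n. x i \<noteq> 0) \<longrightarrow> (\<Sum>i<n. \<Sum>j<n. x i * Q i j * x j) > 0)"

definition ras_x :: "(nat \<Rightarrow> nat \<Rightarrow> real) \<Rightarrow> (nat \<Rightarrow> real) \<Rightarrow> nat set \<Rightarrow> nat \<Rightarrow> real" where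
  "ras_x Q g I = (THE y. (\<forall>i\<in>I. (\<Sum>j\<in>I. Q i j * y j) = - g i) \<and> (\<forall>i. i \<notin> I \<longrightarrow> y i = 0))"

definition ras_s :: "(nat \<Rightarrow> nat \<Rightarrow> real) \<Rightarrow> (nat \<Rightarrow> real) \<Rightarrow> nat set \<Rightarrow> nat \<Rightarrow> real" where
  "ras_s Q g I j = (\<Sum>i\<in>I. Q j i * ras_x Q g I i) + g j"

definition ras_I :: "nat \<Rightarrow> nat set \<Rightarrow> nat set" where
  "ras_I n A = {0..<n} - A"

definition ras_Im :: "nat \<Rightarrow> (nat \<Rightarrow> nat \<Rightarrow> real) \<Rightarrow> (nat \<Rightarrow> real) \<Rightarrow> nat set \<Rightarrow> nat set" where
  "ras_Im n Q g A = {i \<in> ras_I n A. ras_x Q g (ras_I n A) i \<le> 0}"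

definition ras_Am :: "nat \<Rightarrow> (nat \<Rightarrow> nat \<Rightarrow> real) \<Rightarrow> (nat \<Rightarrow> real) \<Rightarrow> real \<Rightarrow> nat set \<Rightarrow> nat set" where
  "ras_Am n Q g tol A = {j \<in> A. ras_s Q g (ras_I n A) j < - tol}"

definition ras_stopped :: "nat \<Rightarrow> (nat \<Rightarrow> nat \<Rightarrow> real) \<Rightarrow> (nat \<Rightarrow> real) \<Rightarrow> real \<Rightarrow> nat set \<Rightarrow> bool" where
  "ras_stopped n Q g tol A \<longleftrightarrow> ras_Im n Q g A \<union> ras_Am n Q g tol A = {}"

definition rand_subset :: "nat set \<Rightarrow> (nat \<Rightarrow> real) \<Rightarrow> nat set pmf" where
  "rand_subset S p = map_pmf (\<lambda>c. {j \<in> S. c j}) (Pi_pmf S False (\<lambda>j. bernoulli_pmf (p j)))"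

definition ras_newA :: "nat \<Rightarrow> (nat \<Rightarrow> nat \<Rightarrow> real) \<Rightarrow> (nat \<Rightarrow> real) \<Rightarrow> real \<Rightarrow> nat set
    \<Rightarrow> nat set \<Rightarrow> nat set \<Rightarrow> nat set" where
  "ras_newA n Q g tol A Imc Amc =
     (A - ras_Am n Q g tol A) \<union> (ras_Am n Q g tol A - Amc) \<union> Imc"

text \<open>One iteration acting on the history (list of active sets A_0, ..., A_k; the last one
  is current). The strategy maps the history to the probability vector (p_j)_j used for
  both p_Im and p_Am.\<close>
definition ras_step :: "nat \<Rightarrow> (nat \<Rightarrow> nat \<Rightarrow> real) \<Rightarrow> (nat \<Rightarrow> real) \<Rightarrow> real
    \<Rightarrow> (nat set list \<Rightarrow> nat \<Rightarrow> real) \<Rightarrow> nat set list \<Rightarrow> nat set list pmf" where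
  "ras_step n Q g tol strat h =
     (let A = last h in
      if ras_stopped n Q g tol A then return_pmf h
      else do {
        Imc \<leftarrow> rand_subset (ras_Im n Q g A) (strat h);
        Amc \<leftarrow> rand_subset (ras_Am n Q g tol A) (strat h);
        return_pmf (h @ [ras_newA n Q g tol A Imc Amc])
      })"

definition ras_hist :: "nat \<Rightarrow> (nat \<Rightarrow> nat \<Rightarrow> real) \<Rightarrow> (nat \<Rightarrow> real) \<Rightarrow> real
    \<Rightarrow> (nat set list \<Rightarrow> nat \<Rightarrow> real) \<Rightarrow> nat set \<Rightarrow> nat \<Rightarrow> nat set list pmf" where
  "ras_hist n Q g tol strat A0 k =
     ((\<lambda>D. bind_pmf D (ras_step n Q g tol strat)) ^^ k) (return_pmf [A0])"

end

theory Submission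
  imports Defs
begin

text \<open>Call B a successor of the active set A if one iteration can move from A to B for some
  outcome of the random choices, i.e. B arises from some Imc \<subseteq> Im and Amc \<subseteq> Am. From every
  active set a stopping one is reachable along successors. Freezing all of Im makes |I| drop
  until x_I > 0. From such a primal feasible set, releasing one j \<in> Am and then freezing, step
  by step, the indices that block the segment from the current point towards x_I reaches another
  feasible set with strictly smaller objective x^T Q x / 2 + g^T x; as there are finitely many
  active sets, a stopping one is reached. Each successor is drawn with probability at least
  \<sigma>^(2n), so if every active set reaches a stopping one within K moves, each block of K
  iterations stops the method with probability at least \<sigma>^(2nK), and the probability of
  still running decays geometrically.\<close>

section \<open>Symmetric positive definite systems\<close>

definition quad_form :: "nat set \<Rightarrow> (nat \<Rightarrow> nat \<Rightarrow> real) \<Rightarrow> (nat \<Rightarrow> real) \<Rightarrow> real" where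
  "quad_form S Q x = (\<Sum>i\<in>S. \<Sum>j\<in>S. x i * Q i j * x j)"

definition mat_vec :: "nat set \<Rightarrow> (nat \<Rightarrow> nat \<Rightarrow> real) \<Rightarrow> (nat \<Rightarrow> real) \<Rightarrow> nat \<Rightarrow> real" where
  "mat_vec S Q x i = (\<Sum>j\<in>S. Q i j * x j)"

definition sym_posdef_on :: "nat set \<Rightarrow> (nat \<Rightarrow> nat \<Rightarrow> real) \<Rightarrow> bool" where
  "sym_posdef_on S Q \<longleftrightarrow> (\<forall>i\<in>S. \<forall>j\<in>S. Q i j = Q j i) \<and>
     (\<forall>x. (\<exists>i\<in>S. x i \<noteq> 0) \<longrightarrow> 0 < quad_form S Q x)"

lemma sym_posdef_iff_on: "sym_posdef n Q \<longleftrightarrow> sym_posdef_on {..<n} Q"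
  by (simp add: sym_posdef_def sym_posdef_on_def quad_form_def Ball_def Bex_def)

lemma sym_posdef_onD:
  assumes "sym_posdef_on S Q"
  shows sym_posdef_on_sym: "\<lbrakk>i \<in> S; j \<in> S\<rbrakk> \<Longrightarrow> Q i j = Q j i"
    and sym_posdef_on_pos: "\<exists>i\<in>S. x i \<noteq> 0 \<Longrightarrow> 0 < quad_form S Q x"
  using assms unfolding sym_posdef_on_def by blast+

lemma quad_form_eq_sum_mat_vec: "quad_form S Q x = (\<Sum>i\<in>S. mat_vec S Q x i * x i)"
  by (simp add: quad_form_def mat_vec_def sum_distrib_left mult_ac)

lemma mat_vec_diff: "mat_vec S Q (\<lambda>i. x i - y i) i = mat_vec S Q x i - mat_vec S Q y i"
  by (simp add: mat_vec_def algebra_simps sum_subtractf)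

lemma sum_mult_support:
  fixes f x :: "nat \<Rightarrow> real"
  assumes "finite S" "T \<subseteq> S" "\<forall>i. i \<notin> T \<longrightarrow> x i = 0"
  shows "(\<Sum>i\<in>S. f i * x i) = (\<Sum>i\<in>T. f i * x i)"
  using assms by (intro sum.mono_neutral_right) auto

lemma mat_vec_support:
  assumes "finite S" "T \<subseteq> S" "\<forall>i. i \<notin> T \<longrightarrow> x i = 0"
  shows "mat_vec S Q x i = mat_vec T Q x i"
  unfolding mat_vec_def using assms by (rule sum_mult_support)

lemma quad_form_support:
  assumes "finite S" "T \<subseteq> S" "\<forall>i. i \<notin> T \<longrightarrow> x i = 0"
  shows "quad_form S Q x = quad_form T Q x"
  unfolding quad_form_eq_sum_mat_vec mat_vec_support[OF assms] sum_mult_support[OF assms] ..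

lemma sym_posdef_on_subset:
  assumes pd: "sym_posdef_on S Q" and "finite S" "T \<subseteq> S"
  shows "sym_posdef_on T Q"
  unfolding sym_posdef_on_def
proof (intro conjI allI impI)
  show "\<forall>i\<in>T. \<forall>j\<in>T. Q i j = Q j i" using sym_posdef_on_sym[OF pd] \<open>T \<subseteq> S\<close> by blast
  fix x :: "nat \<Rightarrow> real" assume "\<exists>i\<in>T. x i \<noteq> 0"
  then have "\<exists>i\<in>S. (if i \<in> T then x i else 0) \<noteq> 0" using \<open>T \<subseteq> S\<close> by auto
  then have "0 < quad_form S Q (\<lambda>i. if i \<in> T then x i else 0)"
    by (rule sym_posdef_on_pos[OF pd])
  also have "quad_form S Q (\<lambda>i. if i \<in> T then x i else 0) = quad_form T Q x"
    by (subst quad_form_support[OF assms(2,3)]) (auto simp: quad_form_def)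
  finally show "0 < quad_form T Q x" .
qed

lemma sym_posdef_on_diag_pos:
  assumes "sym_posdef_on S Q" "finite S" "k \<in> S"
  shows "0 < Q k k"
proof -
  let ?e = "\<lambda>i. if i = k then 1 else 0 :: real"
  have "0 < quad_form S Q ?e" using assms(3) by (intro sym_posdef_on_pos[OF assms(1)]) auto
  also have "quad_form S Q ?e = Q k k"
    using assms(2,3) by (subst quad_form_support[of S "{k}"]) (auto simp: quad_form_def)
  finally show ?thesis .
qed

lemma quad_form_eliminate:
  assumes fin: "finite F" and k: "k \<notin> F" and c: "Q k k \<noteq> 0"
    and sym: "\<And>i. i \<in> F \<Longrightarrow> Q i k = Q k i"
  shows "quad_form (insert k F) Q (x(k := - mat_vec F Q x k / Q k k))
    = quad_form F (\<lambda>i j. Q i j - Q i k * Q k j / Q k k) x"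
proof -
  define c where "c = Q k k"
  define r where "r = mat_vec F Q x k"
  define z where "z = x(k := - r / c)"
  have z: "\<And>i. i \<in> F \<Longrightarrow> z i = x i" using k by (auto simp: z_def)
  have r': "(\<Sum>i\<in>F. x i * Q i k) = r"
    unfolding r_def mat_vec_def using sym by (intro sum.cong) (auto simp: mult.commute)
  have "quad_form (insert k F) Q z
      = z k * c * z k + (\<Sum>j\<in>F. z k * Q k j * z j) + (\<Sum>i\<in>F. z i * Q i k * z k) + quad_form F Q z"
    by (simp add: quad_form_def sum.insert[OF fin k] sum.distrib c_def)
  also have "\<dots> = z k * c * z k + z k * r + r * z k + quad_form F Q x"
  proof -
    have "(\<Sum>j\<in>F. z k * Q k j * z j) = z k * r"
      unfolding r_def mat_vec_def sum_distrib_left by (simp add: z mult.assoc)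
    moreover have "(\<Sum>i\<in>F. z i * Q i k * z k) = r * z k"
      unfolding r'[symmetric] sum_distrib_right by (simp add: z)
    moreover have "quad_form F Q z = quad_form F Q x"
      unfolding quad_form_def by (simp add: z)
    ultimately show ?thesis by simp
  qed
  also have "\<dots> = quad_form F Q x - r * r / c"
    using c by (simp add: z_def c_def field_simps)
  also have "\<dots> = quad_form F (\<lambda>i j. Q i j - Q i k * Q k j / Q k k) x"
  proof -
    have "(\<Sum>i\<in>F. \<Sum>j\<in>F. x i * Q i k * (Q k j * x j)) = r * r"
      unfolding sum_product[symmetric] r' unfolding r_def mat_vec_def ..
    moreover have "x i * (Q i j - Q i k * Q k j / Q k k) * x j
        = x i * Q i j * x j - x i * Q i k * (Q k j * x j) / c" for i j
      by (simp add: c_def right_diff_distrib left_diff_distrib)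
    ultimately show ?thesis
      by (simp add: quad_form_def sum_subtractf sum_divide_distrib[symmetric])
  qed
  finally show ?thesis by (simp add: z_def r_def c_def)
qed

lemma sym_posdef_on_schur_complement:
  assumes pd: "sym_posdef_on (insert k F) Q" and fin: "finite F" and k: "k \<notin> F"
  shows "sym_posdef_on F (\<lambda>i j. Q i j - Q i k * Q k j / Q k k)"
  unfolding sym_posdef_on_def
proof (intro conjI allI impI)
  note sym = sym_posdef_on_sym[OF pd]
  show "\<forall>i\<in>F. \<forall>j\<in>F. Q i j - Q i k * Q k j / Q k k = Q j i - Q j k * Q k i / Q k k"
    using sym by (simp add: mult.commute)
  fix x :: "nat \<Rightarrow> real" assume x: "\<exists>i\<in>F. x i \<noteq> 0"
  have "0 < Q k k" using fin by (intro sym_posdef_on_diag_pos[OF pd]) auto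
  then have "quad_form F (\<lambda>i j. Q i j - Q i k * Q k j / Q k k) x
      = quad_form (insert k F) Q (x(k := - mat_vec F Q x k / Q k k))"
    using sym by (intro quad_form_eliminate[OF fin k, symmetric]) auto
  also have "0 < \<dots>"
    using x k by (intro sym_posdef_on_pos[OF pd]) (metis fun_upd_other insertI2)
  finally show "0 < quad_form F (\<lambda>i j. Q i j - Q i k * Q k j / Q k k) x" .
qed

lemma sym_posdef_on_solvable:
  assumes "finite S" "sym_posdef_on S Q"
  shows "\<exists>y. \<forall>i\<in>S. mat_vec S Q y i = b i"
  using assms
proof (induction S arbitrary: Q b rule: finite_induct)
  case empty
  then show ?case by simp
next
  case (insert k F)
  define c where "c = Q k k"
  have c: "0 < c" unfolding c_def using insert.hyps(1) by (intro sym_posdef_on_diag_pos[OF insert.prems]) auto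
  obtain y' where y': "\<And>i. i \<in> F \<Longrightarrow>
      mat_vec F (\<lambda>i j. Q i j - Q i k * Q k j / c) y' i = b i - Q i k * b k / c"
    using insert.IH[OF sym_posdef_on_schur_complement[OF insert.prems insert.hyps(1,2)],
        where b = "\<lambda>i. b i - Q i k * b k / c"]
    unfolding c_def by blast
  define y where "y = y'(k := (b k - mat_vec F Q y' k) / c)"
  have "mat_vec F Q y i = mat_vec F Q y' i" for i
    using insert.hyps(2) unfolding mat_vec_def y_def by (intro sum.cong) auto
  then have y: "mat_vec (insert k F) Q y i = Q i k * y k + mat_vec F Q y' i" for i
    using insert.hyps by (simp add: mat_vec_def)
  have "mat_vec (insert k F) Q y i = b i" if i: "i \<in> insert k F" for i
  proof (cases "i = k")
    case True
    then show ?thesis using c y[of i] by (simp add: y_def c_def field_simps)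
  next
    case False
    have "mat_vec F (\<lambda>i j. Q i j - Q i k * Q k j / c) y' i = mat_vec F Q y' i - Q i k * mat_vec F Q y' k / c"
      by (simp add: mat_vec_def algebra_simps sum_subtractf sum_distrib_left sum_divide_distrib)
    with y'[of i] False i have "mat_vec F Q y' i = b i - Q i k * b k / c + Q i k * mat_vec F Q y' k / c"
      by simp
    then show ?thesis using c y[of i] by (simp add: y_def field_simps)
  qed
  then show ?case by blast
qed

lemma sym_posdef_on_mat_vec_inj:
  assumes "sym_posdef_on S Q" and eq: "\<forall>i\<in>S. mat_vec S Q y i = mat_vec S Q z i"
  shows "\<forall>i\<in>S. y i = z i"
proof (rule ccontr)
  assume "\<not> (\<forall>i\<in>S. y i = z i)"
  then have "0 < quad_form S Q (\<lambda>i. y i - z i)" by (intro sym_posdef_on_pos[OF assms(1)]) auto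
  moreover have "quad_form S Q (\<lambda>i. y i - z i) = 0"
    using eq by (simp add: quad_form_eq_sum_mat_vec mat_vec_diff)
  ultimately show False by simp
qed

lemma ras_x_solves:
  assumes "finite I" "sym_posdef_on I Q"
  shows "\<forall>i\<in>I. mat_vec I Q (ras_x Q g I) i = - g i"
    and "\<forall>i. i \<notin> I \<longrightarrow> ras_x Q g I i = 0"
proof -
  let ?P = "\<lambda>y. (\<forall>i\<in>I. mat_vec I Q y i = - g i) \<and> (\<forall>i. i \<notin> I \<longrightarrow> y i = 0)"
  obtain y where y: "\<forall>i\<in>I. mat_vec I Q y i = - g i"
    using sym_posdef_on_solvable[OF assms, where b = "\<lambda>i. - g i"] by blast
  define y0 where "y0 i = (if i \<in> I then y i else 0)" for i
  have "mat_vec I Q y0 i = mat_vec I Q y i" for i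
    by (simp add: mat_vec_def y0_def)
  then have "?P y0" using y by (simp add: y0_def)
  moreover have "w = y0" if "?P w" for w
  proof
    fix i show "w i = y0 i"
      using sym_posdef_on_mat_vec_inj[OF assms(2), of w y0] \<open>?P w\<close> \<open>?P y0\<close> by (cases "i \<in> I") auto
  qed
  ultimately have "?P (ras_x Q g I)"
    unfolding ras_x_def mat_vec_def[symmetric] by (rule theI)
  then show "\<forall>i\<in>I. mat_vec I Q (ras_x Q g I) i = - g i" "\<forall>i. i \<notin> I \<longrightarrow> ras_x Q g I i = 0"
    by auto
qed

lemma quad_form_scale: "quad_form S Q (\<lambda>i. t * d i) = t\<^sup>2 * quad_form S Q d"
  by (simp add: quad_form_def sum_distrib_left power2_eq_square mult_ac)

definition quad_objective :: "nat set \<Rightarrow> (nat \<Rightarrow> nat \<Rightarrow> real) \<Rightarrow> (nat \<Rightarrow> real) \<Rightarrow> (nat \<Rightarrow> real) \<Rightarrow> real" where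
  "quad_objective S Q g x = quad_form S Q x / 2 + (\<Sum>i\<in>S. g i * x i)"

lemma quad_form_add:
  assumes "\<And>i j. \<lbrakk>i \<in> S; j \<in> S\<rbrakk> \<Longrightarrow> Q i j = Q j i"
  shows "quad_form S Q (\<lambda>i. v i + d i) = quad_form S Q v + 2 * (\<Sum>i\<in>S. d i * mat_vec S Q v i) + quad_form S Q d"
proof -
  have "(\<Sum>i\<in>S. \<Sum>j\<in>S. v i * Q i j * d j) = (\<Sum>i\<in>S. \<Sum>j\<in>S. d i * Q i j * v j)"
    by (subst sum.swap) (use assms in \<open>auto simp: mult_ac intro!: sum.cong\<close>)
  moreover have "(\<Sum>i\<in>S. \<Sum>j\<in>S. d i * Q i j * v j) = (\<Sum>i\<in>S. d i * mat_vec S Q v i)"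
    by (simp add: mat_vec_def sum_distrib_left mult.assoc)
  ultimately show ?thesis
    by (simp add: quad_form_def algebra_simps sum.distrib)
qed

lemma quad_objective_diff:
  assumes "\<And>i j. \<lbrakk>i \<in> S; j \<in> S\<rbrakk> \<Longrightarrow> Q i j = Q j i"
  shows "quad_objective S Q g u - quad_objective S Q g v
    = (\<Sum>i\<in>S. (mat_vec S Q v i + g i) * (u i - v i)) + quad_form S Q (\<lambda>i. u i - v i) / 2"
  using quad_form_add[of S Q v "\<lambda>i. u i - v i", OF assms]
  by (simp add: quad_objective_def algebra_simps sum.distrib sum_subtractf)

lemma quad_objective_ras_x_gap:
  assumes pd: "sym_posdef_on S Q" and "finite S" "I \<subseteq> S" and y: "\<forall>i. i \<notin> I \<longrightarrow> y i = 0"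
  shows "quad_objective S Q g y - quad_objective S Q g (ras_x Q g I)
    = quad_form S Q (\<lambda>i. y i - ras_x Q g I i) / 2"
proof -
  let ?x = "ras_x Q g I"
  have finI: "finite I" using assms(2,3) by (rule finite_subset[rotated])
  note x = ras_x_solves[OF finI sym_posdef_on_subset[OF pd assms(2,3)], of g]
  have "(\<Sum>i\<in>S. (mat_vec S Q ?x i + g i) * (y i - ?x i)) = 0"
  proof (intro sum.neutral ballI)
    fix i assume "i \<in> S"
    show "(mat_vec S Q ?x i + g i) * (y i - ?x i) = 0"
      using x y mat_vec_support[OF assms(2,3), of ?x Q i] by (cases "i \<in> I") auto
  qed
  then show ?thesis
    using quad_objective_diff[of S Q g y ?x, OF sym_posdef_on_sym[OF pd]] by simp
qed

lemma ratio_test_step: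
  fixes x y :: "nat \<Rightarrow> real"
  assumes "finite M" "M \<noteq> {}" and x: "\<And>i. i \<in> M \<Longrightarrow> x i \<le> 0" and y: "\<And>i. i \<in> M \<Longrightarrow> 0 < y i"
  obtains t where "0 < t" "t \<le> 1" "\<exists>i\<in>M. y i + t * (x i - y i) = 0"
    "\<And>i. i \<in> M \<Longrightarrow> 0 \<le> y i + t * (x i - y i)"
proof -
  \<comment> \<open>r i is the step length at which coordinate i reaches zero\<close>
  define r where "r i = y i / (y i - x i)" for i
  have gap: "\<And>i. i \<in> M \<Longrightarrow> 0 < y i - x i" using x y by fastforce
  have r: "\<And>i. i \<in> M \<Longrightarrow> 0 < r i \<and> r i \<le> 1" using gap x y by (auto simp: r_def)
  have along: "y i + s * (x i - y i) = (y i - x i) * (r i - s)" if "i \<in> M" for i s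
    using gap[OF that] by (simp add: r_def field_simps)
  define t where "t = Min (r ` M)"
  have "t \<in> r ` M" unfolding t_def using assms(1,2) by (intro Min_in) auto
  then obtain k where k: "k \<in> M" "r k = t" by blast
  have t_le: "\<And>i. i \<in> M \<Longrightarrow> t \<le> r i" unfolding t_def using assms(1) by simp
  show ?thesis
  proof (rule that)
    show "0 < t" "t \<le> 1" using r[OF k(1)] k(2) by auto
    show "\<exists>i\<in>M. y i + t * (x i - y i) = 0" using k along by auto
    show "0 \<le> y i + t * (x i - y i)" if "i \<in> M" for i
      using along[OF that] gap[OF that] t_le[OF that] by simp
  qed
qed

section \<open>Reaching a stopping active set\<close>

locale ras_setting =
  fixes n :: nat and Q :: "nat \<Rightarrow> nat \<Rightarrow> real" and g :: "nat \<Rightarrow> real" and tol :: real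
  assumes posdef: "sym_posdef n Q" and tol_nonneg: "0 \<le> tol"
begin

abbreviation "free A \<equiv> ras_I n A"
abbreviation "sol A \<equiv> ras_x Q g (ras_I n A)"
abbreviation "I_minus A \<equiv> ras_Im n Q g A"
abbreviation "A_minus A \<equiv> ras_Am n Q g tol A"
abbreviation "stopped A \<equiv> ras_stopped n Q g tol A"
abbreviation "obj \<equiv> quad_objective {..<n} Q g"

lemma posdef_on: "sym_posdef_on {..<n} Q"
  using posdef by (simp add: sym_posdef_iff_on)

lemma free_subset: "free A \<subseteq> {..<n}"
  by (auto simp: ras_I_def)

lemma free_union: "free (A \<union> H) = free A - H"
  by (auto simp: ras_I_def)

lemma free_remove: "j \<in> A \<Longrightarrow> j < n \<Longrightarrow> free (A - {j}) = insert j (free A)"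
  by (auto simp: ras_I_def)

lemma card_free_union_less: "H \<noteq> {} \<Longrightarrow> H \<subseteq> free A \<Longrightarrow> card (free (A \<union> H)) < card (free A)"
  using finite_subset[OF free_subset] by (intro psubset_card_mono) (auto simp: free_union)

lemma I_minus_subset: "I_minus A \<subseteq> free A"
  by (auto simp: ras_Im_def)

lemma A_minus_subset: "A_minus A \<subseteq> A"
  by (auto simp: ras_Am_def)

lemma sol_solves:
  shows sol_grad_free: "i \<in> free A \<Longrightarrow> mat_vec (free A) Q (sol A) i = - g i"
    and sol_zero: "i \<notin> free A \<Longrightarrow> sol A i = 0"
  using ras_x_solves[OF finite_subset[OF free_subset]
      sym_posdef_on_subset[OF posdef_on finite_lessThan free_subset]] by blast+

lemma mat_vec_sol: "mat_vec {..<n} Q (sol A) i = mat_vec (free A) Q (sol A) i"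
  by (rule mat_vec_support[OF finite_lessThan free_subset]) (use sol_zero in blast)

lemma sol_grad: "i \<in> free A \<Longrightarrow> mat_vec {..<n} Q (sol A) i + g i = 0"
  by (simp add: mat_vec_sol sol_grad_free)

lemma ras_s_eq: "ras_s Q g (free A) j = mat_vec {..<n} Q (sol A) j + g j"
  using mat_vec_sol[of A j] by (simp add: ras_s_def mat_vec_def)

lemma obj_gap:
  "\<forall>i. i \<notin> free A \<longrightarrow> y i = 0 \<Longrightarrow> obj y - obj (sol A) = quad_form {..<n} Q (\<lambda>i. y i - sol A i) / 2"
  by (rule quad_objective_ras_x_gap[OF posdef_on finite_lessThan free_subset])

lemma quad_form_nonneg: "0 \<le> quad_form {..<n} Q d"
proof (cases "\<exists>i<n. d i \<noteq> 0")
  case True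
  then show ?thesis by (intro less_imp_le sym_posdef_on_pos[OF posdef_on]) auto
next
  case False
  then show ?thesis by (simp add: quad_form_def)
qed

lemma obj_sol_le: "\<forall>i. i \<notin> free A \<longrightarrow> y i = 0 \<Longrightarrow> obj (sol A) \<le> obj y"
  using obj_gap[of A y] quad_form_nonneg[of "\<lambda>i. y i - sol A i"] by simp

lemma obj_toward_sol_less:
  assumes y: "\<forall>i. i \<notin> free A \<longrightarrow> y i = 0" and ne: "\<exists>i<n. y i \<noteq> sol A i" and t: "0 < t" "t \<le> 1"
  shows "obj (\<lambda>i. y i + t * (sol A i - y i)) < obj y"
proof -
  let ?y' = "\<lambda>i. y i + t * (sol A i - y i)"
  have y': "\<forall>i. i \<notin> free A \<longrightarrow> ?y' i = 0" using y sol_zero by simp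
  have "(\<lambda>i. ?y' i - sol A i) = (\<lambda>i. (1 - t) * (y i - sol A i))" by (auto simp: algebra_simps)
  then have gap: "obj ?y' - obj (sol A) = (1 - t)\<^sup>2 * (obj y - obj (sol A))"
    by (simp add: obj_gap[OF y] obj_gap[OF y'] quad_form_scale)
  have "0 < obj y - obj (sol A)"
    unfolding obj_gap[OF y] using ne by (intro half_gt_zero sym_posdef_on_pos[OF posdef_on]) auto
  moreover have "(1 - t)\<^sup>2 < 1" using t by (simp add: power_less_one_iff)
  ultimately have "(1 - t)\<^sup>2 * (obj y - obj (sol A)) < obj y - obj (sol A)"
    using mult_strict_right_mono[of "(1 - t)\<^sup>2" 1] by simp
  with gap show ?thesis by linarith
qed

definition ras_move :: "nat set \<Rightarrow> nat set \<Rightarrow> bool" where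
  "ras_move A B \<longleftrightarrow> \<not> stopped A \<and>
     (\<exists>Imc Amc. Imc \<subseteq> I_minus A \<and> Amc \<subseteq> A_minus A \<and> B = ras_newA n Q g tol A Imc Amc)"

lemma ras_move_freeze: "I_minus A \<noteq> {} \<Longrightarrow> H \<subseteq> I_minus A \<Longrightarrow> ras_move A (A \<union> H)"
  unfolding ras_move_def ras_stopped_def
  using A_minus_subset[of A] by (intro conjI exI[of _ H] exI[of _ "{}"]) (auto simp: ras_newA_def)

lemma ras_move_release: "j \<in> A_minus A \<Longrightarrow> ras_move A (A - {j})"
  unfolding ras_move_def ras_stopped_def
  using A_minus_subset[of A] by (intro conjI exI[of _ "{}"] exI[of _ "{j}"]) (auto simp: ras_newA_def)

lemma ras_move_subset: "ras_move A B \<Longrightarrow> A \<subseteq> {..<n} \<Longrightarrow> B \<subseteq> {..<n}"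
  using I_minus_subset[of A] free_subset[of A] A_minus_subset[of A]
  by (auto simp: ras_move_def ras_newA_def)

lemma ras_moves_subset: "ras_move\<^sup>*\<^sup>* A B \<Longrightarrow> A \<subseteq> {..<n} \<Longrightarrow> B \<subseteq> {..<n}"
  by (induction rule: rtranclp_induct) (auto dest: ras_move_subset)

lemma release_sol_pos:
  assumes A: "A \<subseteq> {..<n}" and j: "j \<in> A_minus A"
  shows "0 < sol (A - {j}) j"
proof -
  let ?x = "sol A" and ?x' = "sol (A - {j})"
  have jA: "j \<in> A" using j A_minus_subset by blast
  have free': "free (A - {j}) = insert j (free A)" using jA A by (intro free_remove) auto
  have j_free: "j \<notin> free A" using jA by (simp add: ras_I_def)
  define s where "s = mat_vec {..<n} Q ?x j + g j"
  have s: "s < 0" using j tol_nonneg ras_s_eq[of A j] by (simp add: ras_Am_def s_def)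
  define d where "d = (\<lambda>i. ?x' i - ?x i)"
  have d_free: "mat_vec {..<n} Q d i = 0" if "i \<in> free A" for i
    using sol_grad[of i A] sol_grad[of i "A - {j}"] that free' by (simp add: d_def mat_vec_diff)
  have d_j: "mat_vec {..<n} Q d j = - s"
    using sol_grad[of j "A - {j}"] free' by (simp add: d_def mat_vec_diff s_def)
  have d_supp: "\<forall>i. i \<notin> insert j (free A) \<longrightarrow> d i = 0"
  proof (intro allI impI)
    fix i assume "i \<notin> insert j (free A)"
    then have "i \<notin> free (A - {j})" "i \<notin> free A" using free' by auto
    then show "d i = 0" using sol_zero[of i "A - {j}"] sol_zero[of i A] by (simp add: d_def)
  qed
  have "quad_form {..<n} Q d = (\<Sum>i\<in>insert j (free A). mat_vec {..<n} Q d i * d i)"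
    unfolding quad_form_eq_sum_mat_vec
    using jA A free_subset by (intro sum_mult_support[OF _ _ d_supp]) auto
  also have "\<dots> = - s * d j"
    using j_free d_free d_j finite_subset[OF free_subset] by (simp add: sum.insert)
  finally have q: "quad_form {..<n} Q d = - s * d j" .
  have "\<exists>i<n. d i \<noteq> 0"
  proof (rule ccontr)
    assume "\<not> (\<exists>i<n. d i \<noteq> 0)"
    then have "mat_vec {..<n} Q d j = 0" by (simp add: mat_vec_def)
    with d_j s show False by simp
  qed
  then have "0 < - s * d j" unfolding q[symmetric] by (intro sym_posdef_on_pos[OF posdef_on]) auto
  then show ?thesis using s sol_zero[OF j_free] by (simp add: d_def mult_less_0_iff)
qed

lemma release_improves:
  assumes A: "A \<subseteq> {..<n}" and j: "j \<in> A_minus A"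
  shows "obj (sol (A - {j})) < obj (sol A)"
proof -
  have jA: "j \<in> A" using j A_minus_subset by blast
  have free': "free (A - {j}) = insert j (free A)" using jA A by (intro free_remove) auto
  have j_free: "j \<notin> free A" using jA by (simp add: ras_I_def)
  have "\<forall>i. i \<notin> free (A - {j}) \<longrightarrow> sol A i = 0" using sol_zero free' by blast
  then have "obj (sol A) - obj (sol (A - {j})) = quad_form {..<n} Q (\<lambda>i. sol A i - sol (A - {j}) i) / 2"
    by (rule obj_gap)
  moreover have "0 < quad_form {..<n} Q (\<lambda>i. sol A i - sol (A - {j}) i)"
    using release_sol_pos[OF A j] sol_zero[OF j_free] jA A
    by (intro sym_posdef_on_pos[OF posdef_on] bexI[of _ j]) auto
  ultimately show ?thesis by simp
qed

lemma ratio_test: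
  assumes y_supp: "\<forall>i. i \<notin> free A \<longrightarrow> y i = 0" and y_nonneg: "\<forall>i\<in>free A. 0 \<le> y i"
    and y_pos: "\<forall>i\<in>I_minus A. 0 < y i" and ne: "I_minus A \<noteq> {}"
  obtains H y' where "H \<noteq> {}" "H \<subseteq> I_minus A" "\<forall>i. i \<notin> free (A \<union> H) \<longrightarrow> y' i = 0"
    "\<forall>i\<in>free (A \<union> H). 0 < y' i" "obj y' < obj y"
proof -
  let ?x = "sol A"
  have fin: "finite (I_minus A)"
    by (rule finite_subset[OF I_minus_subset finite_subset[OF free_subset finite_lessThan]])
  obtain t where t: "0 < t" "t \<le> 1" and hit: "\<exists>i\<in>I_minus A. y i + t * (?x i - y i) = 0"
    and nonneg: "\<And>i. i \<in> I_minus A \<Longrightarrow> 0 \<le> y i + t * (?x i - y i)"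
    using ratio_test_step[OF fin ne, of ?x y] y_pos by (auto simp: ras_Im_def)
  define y' where "y' i = y i + t * (?x i - y i)" for i
  define H where "H = {i \<in> I_minus A. y' i = 0}"
  show ?thesis
  proof (rule that)
    show "H \<noteq> {}" "H \<subseteq> I_minus A" using hit by (auto simp: H_def y'_def)
    show "\<forall>i. i \<notin> free (A \<union> H) \<longrightarrow> y' i = 0"
      using y_supp sol_zero by (auto simp: y'_def H_def free_union)
    show "\<forall>i\<in>free (A \<union> H). 0 < y' i"
    proof
      fix i assume "i \<in> free (A \<union> H)"
      then have i: "i \<in> free A" "i \<notin> H" by (auto simp: free_union)
      show "0 < y' i"
      proof (cases "i \<in> I_minus A")
        case True
        then show ?thesis using nonneg[OF True] i(2) by (force simp: H_def y'_def)
      next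
        case False
        then have "0 < ?x i" using i(1) by (auto simp: ras_Im_def)
        moreover have "y' i = (1 - t) * y i + t * ?x i" by (simp add: y'_def algebra_simps)
        ultimately show ?thesis using t y_nonneg i(1) by (simp add: add_nonneg_pos)
      qed
    qed
    obtain i where "i \<in> I_minus A" using ne by blast
    then have "i < n" "y i \<noteq> ?x i"
      using y_pos I_minus_subset free_subset by (fastforce simp: ras_Im_def)+
    then show "obj y' < obj y"
      unfolding y'_def using obj_toward_sol_less[OF y_supp _ t] by blast
  qed
qed

lemma drop_phase:
  assumes "\<forall>i. i \<notin> free A \<longrightarrow> y i = 0" "\<forall>i\<in>free A. 0 \<le> y i" "\<forall>i\<in>I_minus A. 0 < y i"
    and "obj y \<le> v" "obj (sol A) < v"
  shows "\<exists>B. ras_move\<^sup>*\<^sup>* A B \<and> I_minus B = {} \<and> obj (sol B) < v"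
  using assms
proof (induction "card (free A)" arbitrary: A y rule: less_induct)
  case less
  show ?case
  proof (cases "I_minus A = {}")
    case True
    then show ?thesis using less.prems(5) by blast
  next
    case False
    obtain H y' where H: "H \<noteq> {}" "H \<subseteq> I_minus A"
      and y': "\<forall>i. i \<notin> free (A \<union> H) \<longrightarrow> y' i = 0" "\<forall>i\<in>free (A \<union> H). 0 < y' i"
      and less_obj: "obj y' < obj y"
      using ratio_test[OF less.prems(1-3) False] by blast
    have "card (free (A \<union> H)) < card (free A)"
      using H I_minus_subset[of A] by (intro card_free_union_less) auto
    moreover have "obj (sol (A \<union> H)) \<le> obj y'" using y'(1) by (rule obj_sol_le)
    ultimately obtain B where "ras_move\<^sup>*\<^sup>* (A \<union> H) B" "I_minus B = {}" "obj (sol B) < v"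
      using less.hyps[of "A \<union> H" y'] y' I_minus_subset[of "A \<union> H"] less_obj less.prems(4)
      by (fastforce intro: less_imp_le)
    moreover have "ras_move A (A \<union> H)" using False H(2) by (rule ras_move_freeze)
    ultimately show ?thesis by (meson converse_rtranclp_into_rtranclp)
  qed
qed

lemma feasible_descent:
  assumes A: "A \<subseteq> {..<n}" and feasible: "I_minus A = {}" and "\<not> stopped A"
  shows "\<exists>B. ras_move\<^sup>*\<^sup>* A B \<and> I_minus B = {} \<and> obj (sol B) < obj (sol A)"
proof -
  obtain j where j: "j \<in> A_minus A" using feasible \<open>\<not> stopped A\<close> by (auto simp: ras_stopped_def)
  have jA: "j \<in> A" using j A_minus_subset by blast
  have free': "free (A - {j}) = insert j (free A)" using jA A by (intro free_remove) auto
  have released: "0 < sol (A - {j}) j" "obj (sol (A - {j})) < obj (sol A)"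
    using release_sol_pos[OF A j] release_improves[OF A j] by auto
  have sol_pos: "\<forall>i\<in>free A. 0 < sol A i" using feasible by (auto simp: ras_Im_def)
  have "\<exists>B. ras_move\<^sup>*\<^sup>* (A - {j}) B \<and> I_minus B = {} \<and> obj (sol B) < obj (sol A)"
  proof (rule drop_phase)
    show "\<forall>i. i \<notin> free (A - {j}) \<longrightarrow> sol A i = 0"
      unfolding free' using sol_zero by blast
    show "\<forall>i\<in>free (A - {j}). 0 \<le> sol A i"
      unfolding free' using sol_pos sol_zero[of j A] jA by (auto simp: ras_I_def less_imp_le)
    show "\<forall>i\<in>I_minus (A - {j}). 0 < sol A i"
    proof
      fix i assume "i \<in> I_minus (A - {j})"
      then have "i \<in> free (A - {j})" "sol (A - {j}) i \<le> 0" by (auto simp: ras_Im_def)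
      then have "i \<in> free A" using free' released(1) by auto
      then show "0 < sol A i" using sol_pos by blast
    qed
  qed (use released(2) in auto)
  then show ?thesis using ras_move_release[OF j] by (meson converse_rtranclp_into_rtranclp)
qed

lemma feasible_reaches_stop:
  "A \<subseteq> {..<n} \<Longrightarrow> I_minus A = {} \<Longrightarrow> \<exists>B. ras_move\<^sup>*\<^sup>* A B \<and> stopped B"
proof (induction "card {B. B \<subseteq> {..<n} \<and> I_minus B = {} \<and> obj (sol B) < obj (sol A)}"
    arbitrary: A rule: less_induct)
  case less
  let ?better = "\<lambda>A. {B. B \<subseteq> {..<n} \<and> I_minus B = {} \<and> obj (sol B) < obj (sol A)}"
  show ?case
  proof (cases "stopped A")
    case True
    then show ?thesis by blast
  next
    case False
    obtain B where B: "ras_move\<^sup>*\<^sup>* A B" "I_minus B = {}" "obj (sol B) < obj (sol A)"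
      using feasible_descent[OF less.prems False] by blast
    have B_sub: "B \<subseteq> {..<n}" using ras_moves_subset[OF B(1) less.prems(1)] .
    have "?better B \<subset> ?better A" using B B_sub by auto
    then have "card (?better B) < card (?better A)"
      by (intro psubset_card_mono) (auto intro: finite_subset[of _ "Pow {..<n}"])
    then obtain C where "ras_move\<^sup>*\<^sup>* B C" "stopped C" using less.hyps B_sub B(2) by blast
    then show ?thesis using B(1) by (meson rtranclp_trans)
  qed
qed

lemma reaches_stop: "A \<subseteq> {..<n} \<Longrightarrow> \<exists>B. ras_move\<^sup>*\<^sup>* A B \<and> stopped B"
proof (induction "card (free A)" arbitrary: A rule: less_induct)
  case less
  show ?case
  proof (cases "I_minus A = {}")
    case True
    then show ?thesis using feasible_reaches_stop less.prems by blast
  next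
    case False
    have "card (free (A \<union> I_minus A)) < card (free A)"
      using False I_minus_subset by (rule card_free_union_less)
    moreover have "A \<union> I_minus A \<subseteq> {..<n}" using less.prems I_minus_subset free_subset by blast
    ultimately obtain B where "ras_move\<^sup>*\<^sup>* (A \<union> I_minus A) B" "stopped B" using less.hyps by blast
    moreover have "ras_move A (A \<union> I_minus A)" using False by (rule ras_move_freeze) simp
    ultimately show ?thesis by (meson converse_rtranclp_into_rtranclp)
  qed
qed

end

section \<open>Termination with probability one\<close>

lemma measure_pmf_prob_bind:
  "measure_pmf.prob (bind_pmf M f) X = (\<integral>z. measure_pmf.prob (f z) X \<partial>M)"
  unfolding measure_pmf_bind
  by (rule measure_pmf.measure_bind[where N = "count_space UNIV"])
    (auto intro: measurable_measure_pmf simp: measure_pmf_in_subprob_algebra)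

lemma measure_pmf_prob_bind_ge:
  "pmf M x * measure_pmf.prob (f x) X \<le> measure_pmf.prob (bind_pmf M f) X"
proof -
  let ?F = "\<lambda>z. measure_pmf.prob (f z) X"
  have "(\<integral>z. ?F x * indicator {x} z \<partial>M) \<le> (\<integral>z. ?F z \<partial>M)"
  proof (rule integral_mono)
    show "integrable M (\<lambda>z. ?F x * indicator {x} z)" "integrable M ?F"
      by (auto intro!: measure_pmf.integrable_const_bound[where B = 1])
    show "?F x * indicator {x} z \<le> ?F z" for z by (auto simp: indicator_def)
  qed
  then show ?thesis by (simp add: measure_pmf_prob_bind measure_pmf_single mult.commute)
qed

lemma pmf_bind_ge: "pmf M x * pmf (f x) y \<le> pmf (bind_pmf M f) y"
  using measure_pmf_prob_bind_ge[of M x f "{y}"] by (simp add: measure_pmf_single)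

lemma measure_pmf_prob_bind_le:
  assumes "0 \<le> c" and "\<And>z. z \<in> set_pmf M \<Longrightarrow> measure_pmf.prob (f z) U \<le> c * indicator U z"
  shows "measure_pmf.prob (bind_pmf M f) U \<le> c * measure_pmf.prob M U"
proof -
  have "(\<integral>z. measure_pmf.prob (f z) U \<partial>M) \<le> (\<integral>z. c * indicator U z \<partial>M)"
  proof (rule integral_mono_AE)
    show "integrable M (\<lambda>z. measure_pmf.prob (f z) U)"
      by (auto intro!: measure_pmf.integrable_const_bound[where B = 1])
    show "integrable M (\<lambda>z. c * indicator U z)"
      by (intro integrable_mult_right measure_pmf.integrable_const_bound[where B = 1]) auto
    show "AE z in M. measure_pmf.prob (f z) U \<le> c * indicator U z"
      using assms(2) by (rule AE_pmfI)
  qed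
  then show ?thesis by (simp add: measure_pmf_prob_bind)
qed

lemma set_pmf_rand_subset: "T \<in> set_pmf (rand_subset S p) \<Longrightarrow> T \<subseteq> S"
  by (auto simp: rand_subset_def)

lemma pmf_rand_subset_ge:
  assumes "finite S" "T \<subseteq> S" "0 \<le> \<sigma>" and p: "\<And>j. \<sigma> \<le> p j \<and> p j \<le> 1 - \<sigma>"
  shows "\<sigma> ^ card S \<le> pmf (rand_subset S p) T"
proof -
  let ?c = "\<lambda>j. j \<in> T"
  let ?P = "Pi_pmf S False (\<lambda>j. bernoulli_pmf (p j))"
  have "\<sigma> ^ card S = (\<Prod>j\<in>S. \<sigma>)" by simp
  also have "\<dots> \<le> (\<Prod>j\<in>S. pmf (bernoulli_pmf (p j)) (?c j))"
  proof (rule prod_mono)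
    fix j
    have "0 \<le> p j" "p j \<le> 1" using p[of j] assms(3) by auto
    then show "0 \<le> \<sigma> \<and> \<sigma> \<le> pmf (bernoulli_pmf (p j)) (?c j)"
      using p[of j] assms(3) by (cases "j \<in> T") auto
  qed
  also have "\<dots> = pmf ?P ?c"
    using assms(1,2) by (subst pmf_Pi'[OF assms(1)]) auto
  also have "\<dots> \<le> measure_pmf.prob ?P ((\<lambda>c. {j \<in> S. c j}) -` {T})"
    unfolding measure_pmf_single[symmetric] using assms(2)
    by (intro measure_pmf.finite_measure_mono) auto
  also have "\<dots> = pmf (rand_subset S p) T"
    by (simp add: rand_subset_def pmf_map)
  finally show ?thesis .
qed

locale ras_process = ras_setting +
  fixes strat :: "nat set list \<Rightarrow> nat \<Rightarrow> real" and \<sigma> :: real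
  assumes \<sigma>_pos: "0 < \<sigma>" and strat_bounds: "\<And>h j. \<sigma> \<le> strat h j \<and> strat h j \<le> 1 - \<sigma>"
begin

abbreviation "step \<equiv> ras_step n Q g tol strat"

text \<open>ras_hist is the special case h = [A0]; arbitrary initial histories are needed to
  restart the process after a block of iterations.\<close>

definition ras_run :: "nat \<Rightarrow> nat set list \<Rightarrow> nat set list pmf" where
  "ras_run k h = ((\<lambda>D. bind_pmf D step) ^^ k) (return_pmf h)"

abbreviation running :: "nat set list set" where
  "running \<equiv> {h. \<not> stopped (last h)}"

lemma ras_run_0: "ras_run 0 h = return_pmf h"
  by (simp add: ras_run_def)

lemma ras_run_Suc: "ras_run (Suc k) h = bind_pmf (ras_run k h) step"
  by (simp add: ras_run_def)

lemma ras_run_add: "ras_run (a + b) h = bind_pmf (ras_run a h) (ras_run b)"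
proof (induction b)
  case 0
  then show ?case by (simp add: ras_run_0 bind_return_pmf')
next
  case (Suc b)
  then show ?case by (simp add: ras_run_Suc bind_assoc_pmf)
qed

lemma ras_run_Suc_left: "ras_run (Suc k) h = bind_pmf (step h) (ras_run k)"
  using ras_run_add[of 1 k h] by (simp add: ras_run_def bind_return_pmf)

lemma ras_run_stopped: "stopped (last h) \<Longrightarrow> ras_run k h = return_pmf h"
  by (induction k) (simp_all add: ras_run_0 ras_run_Suc ras_step_def bind_return_pmf)

lemma set_pmf_ras_step:
  assumes "h' \<in> set_pmf (step h)"
  shows "h' = h \<or> (\<exists>B. ras_move (last h) B \<and> h' = h @ [B])"
proof (cases "stopped (last h)")
  case True
  then show ?thesis using assms by (simp add: ras_step_def)
next
  case False
  with assms obtain Imc Amc where Imc: "Imc \<in> set_pmf (rand_subset (I_minus (last h)) (strat h))"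
    and Amc: "Amc \<in> set_pmf (rand_subset (A_minus (last h)) (strat h))"
    and h': "h' = h @ [ras_newA n Q g tol (last h) Imc Amc]"
    by (auto simp: ras_step_def Let_def)
  have "ras_move (last h) (ras_newA n Q g tol (last h) Imc Amc)"
    unfolding ras_move_def using False set_pmf_rand_subset[OF Imc] set_pmf_rand_subset[OF Amc]
    by (intro conjI exI[of _ Imc] exI[of _ Amc]) auto
  then show ?thesis using h' by blast
qed

lemma ras_run_subset: "last h \<subseteq> {..<n} \<Longrightarrow> h' \<in> set_pmf (ras_run k h) \<Longrightarrow> last h' \<subseteq> {..<n}"
proof (induction k arbitrary: h')
  case 0
  then show ?case by (simp add: ras_run_0)
next
  case (Suc k)
  then obtain h'' where "h'' \<in> set_pmf (ras_run k h)" "h' \<in> set_pmf (step h'')"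
    by (auto simp: ras_run_Suc)
  then show ?case using Suc.IH[OF Suc.prems(1)] by (auto dest!: set_pmf_ras_step ras_move_subset)
qed

text \<open>Each of the two random subsets takes any admissible value with probability at least
  \<sigma>^n.\<close>

definition move_prob :: real where
  "move_prob = \<sigma> ^ (2 * n)"

lemma move_prob_pos: "0 < move_prob"
  using \<sigma>_pos by (simp add: move_prob_def)

lemma move_prob_le_1: "move_prob \<le> 1"
  using \<sigma>_pos strat_bounds[of undefined 0] by (simp add: move_prob_def power_le_one)

lemma pmf_rand_subset_strat_ge: "S \<subseteq> {..<n} \<Longrightarrow> T \<subseteq> S \<Longrightarrow> \<sigma> ^ n \<le> pmf (rand_subset S (strat h)) T"
proof -
  assume S: "S \<subseteq> {..<n}" and T: "T \<subseteq> S"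
  have "\<sigma> ^ n \<le> \<sigma> ^ card S"
    using \<sigma>_pos strat_bounds[of h 0] card_mono[OF finite_lessThan S]
    by (intro power_decreasing) auto
  also have "\<dots> \<le> pmf (rand_subset S (strat h)) T"
    using finite_subset[OF S] T \<sigma>_pos strat_bounds by (intro pmf_rand_subset_ge) auto
  finally show ?thesis .
qed

lemma ras_step_move_ge:
  assumes A: "last h \<subseteq> {..<n}" and move: "ras_move (last h) B"
  shows "move_prob \<le> pmf (step h) (h @ [B])"
proof -
  let ?A = "last h"
  obtain Imc Amc where Imc: "Imc \<subseteq> I_minus ?A" and Amc: "Amc \<subseteq> A_minus ?A"
    and B: "B = ras_newA n Q g tol ?A Imc Amc" and running: "\<not> stopped ?A"
    using move by (auto simp: ras_move_def)
  let ?Pi = "rand_subset (I_minus ?A) (strat h)" and ?Pa = "rand_subset (A_minus ?A) (strat h)"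
  have "move_prob \<le> pmf ?Pi Imc * (pmf ?Pa Amc * pmf (return_pmf (h @ [B])) (h @ [B]))"
    unfolding move_prob_def mult_2 power_add
    using pmf_rand_subset_strat_ge[OF subset_trans[OF I_minus_subset free_subset] Imc, of h]
      pmf_rand_subset_strat_ge[OF subset_trans[OF A_minus_subset A] Amc, of h] \<sigma>_pos
    by (simp add: mult_mono)
  also have "\<dots> \<le> pmf ?Pi Imc * pmf (bind_pmf ?Pa (\<lambda>b. return_pmf (h @ [ras_newA n Q g tol ?A Imc b]))) (h @ [B])"
    unfolding B by (intro mult_left_mono pmf_bind_ge pmf_nonneg)
  also have "\<dots> \<le> pmf (bind_pmf ?Pi (\<lambda>a. bind_pmf ?Pa (\<lambda>b. return_pmf (h @ [ras_newA n Q g tol ?A a b]))))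
      (h @ [B])"
    unfolding B by (rule pmf_bind_ge)
  also have "\<dots> = pmf (step h) (h @ [B])"
    using running by (simp add: ras_step_def Let_def)
  finally show ?thesis .
qed

lemma ras_run_stop_ge:
  "(ras_move ^^ k) (last h) B \<Longrightarrow> stopped B \<Longrightarrow> last h \<subseteq> {..<n} \<Longrightarrow>
    move_prob ^ k \<le> measure_pmf.prob (ras_run k h) (- running)"
proof (induction k arbitrary: h)
  case 0
  then show ?case by (simp add: ras_run_0)
next
  case (Suc k)
  obtain C where C: "ras_move (last h) C" "(ras_move ^^ k) C B"
    using Suc.prems(1) by (rule relpowp_Suc_E2)
  have "move_prob * move_prob ^ k \<le> pmf (step h) (h @ [C]) * measure_pmf.prob (ras_run k (h @ [C])) (- running)"
    using ras_step_move_ge[OF Suc.prems(3) C(1)] Suc.IH[of "h @ [C]"] C(2) Suc.prems(2)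
      ras_move_subset[OF C(1) Suc.prems(3)] move_prob_pos
    by (intro mult_mono) auto
  also have "\<dots> \<le> measure_pmf.prob (ras_run (Suc k) h) (- running)"
    unfolding ras_run_Suc_left by (rule measure_pmf_prob_bind_ge)
  finally show ?case by simp
qed

lemma ras_run_running_add_le:
  assumes "0 \<le> c" and bound: "\<And>z. last z \<subseteq> {..<n} \<Longrightarrow> \<not> stopped (last z) \<Longrightarrow>
      measure_pmf.prob (ras_run b z) running \<le> c"
    and h: "last h \<subseteq> {..<n}"
  shows "measure_pmf.prob (ras_run (a + b) h) running \<le> c * measure_pmf.prob (ras_run a h) running"
  unfolding ras_run_add
proof (rule measure_pmf_prob_bind_le[OF \<open>0 \<le> c\<close>])
  fix z assume z: "z \<in> set_pmf (ras_run a h)"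
  show "measure_pmf.prob (ras_run b z) running \<le> c * indicator running z"
  proof (cases "stopped (last z)")
    case True
    then show ?thesis using \<open>0 \<le> c\<close> by (simp add: ras_run_stopped)
  next
    case False
    then show ?thesis using bound[OF ras_run_subset[OF h z]] by simp
  qed
qed

lemma ras_run_running_mono:
  "last h \<subseteq> {..<n} \<Longrightarrow> a \<le> k \<Longrightarrow>
    measure_pmf.prob (ras_run k h) running \<le> measure_pmf.prob (ras_run a h) running"
  using ras_run_running_add_le[of 1 "k - a" h a] by simp

lemma ras_run_running_uniform:
  obtains K where "0 < K"
    "\<And>h. last h \<subseteq> {..<n} \<Longrightarrow> measure_pmf.prob (ras_run K h) running \<le> 1 - move_prob ^ K"
proof -
  have "\<forall>A\<in>Pow {..<n}. \<exists>k B. (ras_move ^^ k) A B \<and> stopped B"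
    using reaches_stop by (blast dest: rtranclp_imp_relpowp)
  then obtain k where k: "\<And>A. A \<subseteq> {..<n} \<Longrightarrow> \<exists>B. (ras_move ^^ k A) A B \<and> stopped B"
    by (metis PowI)
  define K where "K = Suc (Max (k ` Pow {..<n}))"
  show ?thesis
  proof (rule that)
    show "0 < K" by (simp add: K_def)
    fix h assume h: "last h \<subseteq> {..<n}"
    then obtain B where "(ras_move ^^ k (last h)) (last h) B" "stopped B" using k by blast
    then have "move_prob ^ k (last h) \<le> measure_pmf.prob (ras_run (k (last h)) h) (- running)"
      using h by (rule ras_run_stop_ge)
    moreover have k_le: "k (last h) \<le> K" using h by (simp add: K_def le_SucI)
    then have "move_prob ^ K \<le> move_prob ^ k (last h)"
      using move_prob_pos move_prob_le_1 by (intro power_decreasing) auto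
    ultimately have "measure_pmf.prob (ras_run (k (last h)) h) running \<le> 1 - move_prob ^ K"
      using measure_pmf.prob_compl[of running "ras_run (k (last h)) h"] by (simp add: Compl_eq_Diff_UNIV)
    then show "measure_pmf.prob (ras_run K h) running \<le> 1 - move_prob ^ K"
      using ras_run_running_mono[OF h k_le] by linarith
  qed
qed

lemma ras_run_running_tendsto:
  assumes A0: "A0 \<subseteq> {..<n}"
  shows "(\<lambda>k. measure_pmf.prob (ras_run k [A0]) running) \<longlonglongrightarrow> 0"
proof -
  obtain K where K: "0 < K"
    and block: "\<And>h. last h \<subseteq> {..<n} \<Longrightarrow> measure_pmf.prob (ras_run K h) running \<le> 1 - move_prob ^ K"
    using ras_run_running_uniform by blast
  define c where "c = 1 - move_prob ^ K"
  have c: "0 \<le> c" "c < 1"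
    using move_prob_pos move_prob_le_1 by (auto simp: c_def power_le_one)
  have geometric: "measure_pmf.prob (ras_run (j * K) [A0]) running \<le> c ^ j" for j
  proof (induction j)
    case 0
    then show ?case by simp
  next
    case (Suc j)
    have "measure_pmf.prob (ras_run (j * K + K) [A0]) running
        \<le> c * measure_pmf.prob (ras_run (j * K) [A0]) running"
      using A0 block c(1) unfolding c_def by (intro ras_run_running_add_le) auto
    also have "\<dots> \<le> c * c ^ j" using Suc.IH c(1) by (rule mult_left_mono)
    finally show ?case by (simp add: add.commute)
  qed
  have bound: "measure_pmf.prob (ras_run k [A0]) running \<le> c ^ (k div K)" for k
  proof -
    have "measure_pmf.prob (ras_run k [A0]) running \<le> measure_pmf.prob (ras_run (k div K * K) [A0]) running"
      using A0 by (intro ras_run_running_mono) (simp_all add: div_times_less_eq_dividend)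
    also have "\<dots> \<le> c ^ (k div K)" by (rule geometric)
    finally show ?thesis .
  qed
  have "norm c < 1" using c by simp
  then have lim: "(\<lambda>k. c ^ (k div K)) \<longlonglongrightarrow> 0"
    by (rule filterlim_compose[OF LIMSEQ_power_zero filterlim_at_top_div_const_nat[OF K]])
  have lower: "\<forall>\<^sub>F k in sequentially. 0 \<le> measure_pmf.prob (ras_run k [A0]) running"
    by (rule always_eventually) simp
  have upper: "\<forall>\<^sub>F k in sequentially. measure_pmf.prob (ras_run k [A0]) running \<le> c ^ (k div K)"
    using bound by (rule always_eventually[OF allI])
  show ?thesis by (rule tendsto_sandwich[OF lower upper tendsto_const lim])
qed

end

theorem theorem2p3:
  fixes n :: nat and Q :: "nat \<Rightarrow> nat \<Rightarrow> real" and g :: "nat \<Rightarrow> real"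
    and \<sigma> tol :: real and A0 :: "nat set" and strat :: "nat set list \<Rightarrow> nat \<Rightarrow> real"
  assumes "sym_posdef n Q"
    and "0 < \<sigma>" and "\<sigma> \<le> 1/2" and "0 \<le> tol"
    and "A0 \<subseteq> {0..<n}"
    and "\<And>h j. \<sigma> \<le> strat h j \<and> strat h j \<le> 1 - \<sigma>"
  shows "(\<lambda>k. measure_pmf.prob (ras_hist n Q g tol strat A0 k)
                {h. \<not> ras_stopped n Q g tol (last h)}) \<longlonglongrightarrow> 0"
proof -
  interpret ras_process n Q g tol strat \<sigma>
    using assms by unfold_locales auto
  have "ras_hist n Q g tol strat A0 k = ras_run k [A0]" for k
    by (simp add: ras_hist_def ras_run_def)
  then show ?thesis
    using ras_run_running_tendsto assms(5) by (simp add: atLeast0LessThan)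
qed

end
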